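(* Let $N\subset\mathbb{R}^d$ be compact and convex, and let $f_n,f:N\to\mathbb{R}$ ($n\in\mathbb{N}$) be convex functions. Extend them to $\mathbb{R}^d$ by $f_{n,N}=f_n+O_N$ and $f_N=f+O_N$. Assume that $f_N^*$ is differentiable on $\mathbb{R}^d$ with $\nabla f_N^*:\mathbb{R}^d\to N$ continuous, and that there is a compact set $M\subset\mathbb{R}^d$ with $\nabla f_N^*(M)=N$. Then $$\sup_{y\in N}|f_n(y)-f(y)|\to0\ \Longrightarrow\ \sup_{x\in\mathbb{R}^d}\ \sup_{y\in\partial f_{n,N}^*(x)}\big\|y-\nabla f_N^*(x)\big\|\to0 .$$
   Context: $O_N(y)=0$ for $y\in N$ and $O_N(y)=+\infty$ otherwise. For $g:\mathbb{R}^d\to\mathbb{R}\cup\{+\infty\}$, the Legendre transform is $g^*(x)=\sup_{y\in\mathbb{R}^d}(\langle x,y\rangle-g(y))$, and $\partial g^*(x)=\{y:\ g^*(z)\ge g^*(x)+\langle y,z-x\rangle\ \forall z\}$ is the convex subdifferential. *)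

theory Defs
  imports "HOL-Analysis.Analysis"
begin

definition ext_ind :: "'a set \<Rightarrow> ('a \<Rightarrow> real) \<Rightarrow> 'a \<Rightarrow> ereal" where
  "ext_ind N g y = (if y \<in> N then ereal (g y) else \<infinity>)"

definition legendre :: "('a::real_inner \<Rightarrow> ereal) \<Rightarrow> 'a \<Rightarrow> ereal" where
  "legendre g x = (SUP y. ereal (inner x y) - g y)"

definition subdiff :: "('a::real_inner \<Rightarrow> ereal) \<Rightarrow> 'a \<Rightarrow> 'a set" where
  "subdiff g x = {y. \<forall>z. g z \<ge> g x + ereal (inner y (z - x))}"

end

theory Submission
  imports Defs
begin

text \<open>
  Write F for the conjugate of f + O_N and G for its gradient. A uniform perturbation of f by
  at most \<epsilon> on N perturbs the conjugate uniformly by at most \<epsilon>, so every subgradient of the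
  conjugate of f_n + O_N is a 2\<epsilon>-subgradient of F; and all approximate subgradients of F lie in
  N, because F grows along every direction separating a point from N. At points of the compact
  set M, approximate subgradients of F are uniformly close to G: otherwise a limiting argument
  produces a subgradient different from the gradient. For an arbitrary point x and an
  e-subgradient y, the midpoint of G x and y lies in N, hence equals G m for some m \<in> M, and
  G x turns out to be an e-subgradient of F at m; so G x is close to G m, which is half way to y.
\<close>

lemma convex_on_has_derivative_ge:
  fixes F :: "'a::real_normed_vector \<Rightarrow> real"
  assumes cvx: "convex_on UNIV F" and der: "(F has_derivative D) (at x)"
  shows "F x + D (z - x) \<le> F z"
proof -
  let ?p = "\<lambda>t::real. F (x + t *\<^sub>R (z - x))"
  have "convex_on UNIV ?p"
  proof (rule convex_onI)
    fix t a b :: real assume "0 < t" "t < 1"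
    then show "?p ((1 - t) *\<^sub>R a + t *\<^sub>R b) \<le> (1 - t) * ?p a + t * ?p b"
      using convex_onD[OF cvx, of t "x + a *\<^sub>R (z - x)" "x + b *\<^sub>R (z - x)"]
      by (simp add: algebra_simps)
  qed simp
  moreover have "((\<lambda>t::real. x + t *\<^sub>R (z - x)) has_derivative (\<lambda>t. t *\<^sub>R (z - x))) (at 0)"
    by (auto intro!: derivative_eq_intros)
  from diff_chain_at[OF this] der
  have "(?p has_derivative (\<lambda>t. D (t *\<^sub>R (z - x)))) (at 0)"
    by (simp add: o_def)
  then have "(?p has_field_derivative D (z - x)) (at 0)"
    using linear_scale[OF has_derivative_linear[OF der]]
    by (simp add: has_field_derivative_def mult.commute[of _ "D (z - x)"])
  ultimately show ?thesis
    using convex_on_imp_above_tangent[of UNIV ?p 0 1] by fastforce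
qed

definition eps_subgrad :: "('a::real_inner \<Rightarrow> real) \<Rightarrow> real \<Rightarrow> 'a \<Rightarrow> 'a \<Rightarrow> bool" where
  "eps_subgrad F e x y \<longleftrightarrow> (\<forall>z. F x + inner y (z - x) - e \<le> F z)"

lemma eps_subgrad_nonneg: "eps_subgrad F e x y \<Longrightarrow> 0 \<le> e"
  unfolding eps_subgrad_def by (auto dest: spec[of _ x])

lemma eps_subgrad_mono:
  "eps_subgrad F e x y \<Longrightarrow> e \<le> e' \<Longrightarrow> eps_subgrad F e' x y"
  unfolding eps_subgrad_def by (meson diff_left_mono order_trans)

lemma eps_subgrad_convex_combination:
  assumes u: "eps_subgrad F e x u" and v: "eps_subgrad F e' x v" and s: "0 \<le> s" "s \<le> 1"
  shows "eps_subgrad F ((1 - s) * e + s * e') x ((1 - s) *\<^sub>R u + s *\<^sub>R v)"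
  unfolding eps_subgrad_def
proof
  fix z
  have "(1 - s) * (F x + inner u (z - x) - e) + s * (F x + inner v (z - x) - e') \<le> (1 - s) * F z + s * F z"
    using u v s by (intro add_mono mult_left_mono) (auto simp: eps_subgrad_def)
  then show "F x + inner ((1 - s) *\<^sub>R u + s *\<^sub>R v) (z - x) - ((1 - s) * e + s * e') \<le> F z"
    by (simp add: inner_add_left algebra_simps)
qed

lemma eps_subgrad_at_distance:
  assumes g: "eps_subgrad F 0 x g" and u: "eps_subgrad F e x u"
    and "0 < \<delta>" and far: "\<delta> \<le> norm (u - g)"
  obtains v where "eps_subgrad F e x v" and "norm (v - g) = \<delta>"
proof
  define s where "s = \<delta> / norm (u - g)"
  have "u \<noteq> g"
    using far \<open>0 < \<delta>\<close> by auto
  then have s: "0 \<le> s" "s \<le> 1"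
    using far \<open>0 < \<delta>\<close> by (auto simp: s_def divide_le_eq_1)
  have "eps_subgrad F ((1 - s) * 0 + s * e) x ((1 - s) *\<^sub>R g + s *\<^sub>R u)"
    using g u s by (rule eps_subgrad_convex_combination)
  moreover have "s * e \<le> e"
    using s eps_subgrad_nonneg[OF u] by (simp add: mult_left_le_one_le)
  ultimately show "eps_subgrad F e x ((1 - s) *\<^sub>R g + s *\<^sub>R u)"
    by (auto elim: eps_subgrad_mono)
  show "norm ((1 - s) *\<^sub>R g + s *\<^sub>R u - g) = \<delta>"
    using \<open>u \<noteq> g\<close> \<open>0 < \<delta>\<close> by (simp add: s_def algebra_simps flip: scaleR_diff_right)
qed

lemma eps_subgrad_limit:
  fixes F :: "'a::real_inner \<Rightarrow> real"
  assumes sub: "\<And>k. eps_subgrad F (e k) (x k) (y k)"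
    and "e \<longlonglongrightarrow> 0" and x: "x \<longlonglongrightarrow> x0" and "y \<longlonglongrightarrow> y0" and F: "isCont F x0"
  shows "eps_subgrad F 0 x0 y0"
  unfolding eps_subgrad_def
proof
  fix z
  have "(\<lambda>k. F (x k) + inner (y k) (z - x k) - e k) \<longlonglongrightarrow> F x0 + inner y0 (z - x0) - 0"
    by (intro tendsto_intros isCont_tendsto_compose[OF F x] assms)
  moreover have "\<forall>k. F (x k) + inner (y k) (z - x k) - e k \<le> F z"
    using sub by (simp add: eps_subgrad_def)
  ultimately show "F x0 + inner y0 (z - x0) - 0 \<le> F z"
    by (simp add: LIMSEQ_le_const2)
qed

lemma gradient_eps_subgrad_zero:
  fixes F :: "'a::real_inner \<Rightarrow> real"
  assumes "convex_on UNIV F" and "(F has_derivative (\<lambda>h. inner g h)) (at x)"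
  shows "eps_subgrad F 0 x g"
  using convex_on_has_derivative_ge[OF assms] by (simp add: eps_subgrad_def)

lemma eps_subgrad_zero_eq_gradient:
  fixes F :: "'a::real_inner \<Rightarrow> real"
  assumes der: "(F has_derivative (\<lambda>h. inner g h)) (at x)" and u: "eps_subgrad F 0 x u"
  shows "u = g"
proof -
  have "((\<lambda>z. F z - inner u z) has_derivative (\<lambda>h. inner g h - inner u h)) (at x)"
    using der by (auto intro!: derivative_eq_intros)
  moreover have "\<forall>\<^sub>F z in at x. F x - inner u x \<le> F z - inner u z"
  proof (intro always_eventually allI)
    fix z show "F x - inner u x \<le> F z - inner u z"
      using u[unfolded eps_subgrad_def, rule_format, of z] by (simp add: inner_diff_right)
  qed
  ultimately have "inner g h - inner u h = 0" for h
    by (rule has_derivative_local_min[THEN fun_cong, of _ _ _ h, simplified])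
  then have "inner (g - u) (g - u) = 0"
    by (simp add: inner_diff_left)
  then show ?thesis by simp
qed

lemma eps_subgrad_at_midpoint_preimage:
  fixes F :: "'a::real_inner \<Rightarrow> real"
  assumes grad: "\<And>x. eps_subgrad F 0 x (G x)"
    and m: "G m = midpoint (G x) y" and y: "eps_subgrad F e x y"
  shows "eps_subgrad F e m (G x)"
  unfolding eps_subgrad_def
proof
  fix z
  have "G m - G x = y - G m"
    using m[symmetric] unfolding midpoint_eq_iff by (simp add: algebra_simps)
  then have "inner (G m - G x) (x - m) = inner (y - G m) (x - m)"
    by simp
  txt \<open>Both inequalities below bound F x - F m; together they give inner (G m - y) (x - m) \<le> e.\<close>
  moreover have "F m + inner (G m) (x - m) \<le> F x" "F x + inner y (m - x) - e \<le> F m"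
    using grad[of m] y by (auto simp: eps_subgrad_def)
  moreover have "F x + inner (G x) (z - x) \<le> F z"
    using grad[of x] by (simp add: eps_subgrad_def)
  ultimately show "F m + inner (G x) (z - m) - e \<le> F z"
    by (simp add: inner_diff_left inner_diff_right)
qed

lemma legendre_ext_ind_ge:
  assumes "y \<in> N"
  shows "ereal (inner x y - f y) \<le> legendre (ext_ind N f) x"
proof -
  have "ereal (inner x y) - ext_ind N f y \<le> legendre (ext_ind N f) x"
    unfolding legendre_def by (rule SUP_upper) simp
  with assms show ?thesis by (simp add: ext_ind_def)
qed

lemma legendre_ext_ind_le:
  assumes "\<And>y. y \<in> N \<Longrightarrow> inner x y - f y \<le> c"
  shows "legendre (ext_ind N f) x \<le> ereal c"
  unfolding legendre_def
proof (rule SUP_least)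
  fix y show "ereal (inner x y) - ext_ind N f y \<le> ereal c"
    using assms[of y] by (cases "y \<in> N") (auto simp: ext_ind_def)
qed

lemma convex_on_legendre_ext_ind:
  assumes F: "\<And>x. legendre (ext_ind N f) x = ereal (F x)"
  shows "convex_on UNIV F"
proof (rule convex_onI)
  fix t :: real and a b assume t: "0 < t" "t < 1"
  have "inner ((1 - t) *\<^sub>R a + t *\<^sub>R b) y - f y \<le> (1 - t) * F a + t * F b" if "y \<in> N" for y
  proof -
    have "inner a y - f y \<le> F a" "inner b y - f y \<le> F b"
      using legendre_ext_ind_ge[OF that] F by (metis ereal_less_eq(3))+
    then have "(1 - t) * (inner a y - f y) + t * (inner b y - f y) \<le> (1 - t) * F a + t * F b"
      using t by (intro add_mono mult_left_mono) auto
    then show ?thesis by (simp add: inner_add_left algebra_simps)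
  qed
  then have "legendre (ext_ind N f) ((1 - t) *\<^sub>R a + t *\<^sub>R b) \<le> ereal ((1 - t) * F a + t * F b)"
    by (rule legendre_ext_ind_le)
  then show "F ((1 - t) *\<^sub>R a + t *\<^sub>R b) \<le> (1 - t) * F a + t * F b"
    by (simp add: F)
qed simp

lemma legendre_ext_ind_perturb:
  assumes f: "legendre (ext_ind N f) x = ereal c"
    and h: "\<And>y. y \<in> N \<Longrightarrow> \<bar>h y - f y\<bar> \<le> \<epsilon>"
  obtains r where "legendre (ext_ind N h) x = ereal r" and "\<bar>r - c\<bar> \<le> \<epsilon>"
proof -
  have f_le: "inner x y - f y \<le> c" if "y \<in> N" for y
    using legendre_ext_ind_ge[OF that, of x f] f by simp
  obtain y0 where "y0 \<in> N"
  proof (cases "N = {}")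
    case True
    then have "legendre (ext_ind N f) x \<le> ereal (c - 1)" by (intro legendre_ext_ind_le) auto
    with f show ?thesis by simp
  qed auto
  have upper: "legendre (ext_ind N h) x \<le> ereal (c + \<epsilon>)"
    using f_le h by (intro legendre_ext_ind_le) (smt (verit))
  obtain r where r: "legendre (ext_ind N h) x = ereal r"
    using upper legendre_ext_ind_ge[OF \<open>y0 \<in> N\<close>, of x h]
    by (cases "legendre (ext_ind N h) x") auto
  have "legendre (ext_ind N f) x \<le> ereal (r + \<epsilon>)"
  proof (rule legendre_ext_ind_le)
    fix y assume "y \<in> N"
    with legendre_ext_ind_ge[of y N x h] r h[of y] show "inner x y - f y \<le> r + \<epsilon>" by simp
  qed
  with upper r f have "\<bar>r - c\<bar> \<le> \<epsilon>" by simp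
  with r show thesis by (rule that)
qed

lemma subdiff_legendre_ext_ind_eps_subgrad:
  assumes F: "\<And>x. legendre (ext_ind N f) x = ereal (F x)"
    and h: "\<And>y. y \<in> N \<Longrightarrow> \<bar>h y - f y\<bar> \<le> \<epsilon>"
    and y: "y \<in> subdiff (legendre (ext_ind N h)) x"
  shows "eps_subgrad F (2 * \<epsilon>) x y"
proof -
  have "\<forall>z. \<exists>r. legendre (ext_ind N h) z = ereal r \<and> \<bar>r - F z\<bar> \<le> \<epsilon>"
    using legendre_ext_ind_perturb[OF F h] by metis
  then obtain R where R: "\<And>z. legendre (ext_ind N h) z = ereal (R z)" "\<And>z. \<bar>R z - F z\<bar> \<le> \<epsilon>"
    by metis
  show ?thesis unfolding eps_subgrad_def
  proof
    fix z
    have "R x + inner y (z - x) \<le> R z"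
      using y by (simp add: subdiff_def R(1))
    then show "F x + inner y (z - x) - 2 * \<epsilon> \<le> F z"
      using R(2)[of x] R(2)[of z] by linarith
  qed
qed

lemma eps_subgrad_legendre_ext_ind_mem:
  fixes N :: "'a::euclidean_space set"
  assumes F: "\<And>x. legendre (ext_ind N f) x = ereal (F x)" and "closed N" and "convex N"
    and y: "eps_subgrad F e x y"
  shows "y \<in> N"
proof (rule ccontr)
  assume "y \<notin> N"
  then obtain a b where ab: "inner a y < b" "\<forall>v\<in>N. b < inner a v"
    using separating_hyperplane_closed_point[OF \<open>convex N\<close> \<open>closed N\<close>] by blast
  have "0 \<le> e" using y by (rule eps_subgrad_nonneg)
  txt \<open>Moving from x by -t a lowers F at rate at least b, while y predicts a rate of only inner a y.\<close>
  define t where "t = (e + 1) / (b - inner a y)"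
  have "0 < t" using \<open>0 \<le> e\<close> ab(1) by (simp add: t_def)
  have "F (x - t *\<^sub>R a) \<le> F x - t * b"
  proof -
    have "inner (x - t *\<^sub>R a) v - f v \<le> F x - t * b" if "v \<in> N" for v
    proof -
      have "inner x v - f v \<le> F x"
        using legendre_ext_ind_ge[OF that, of x f] F by simp
      moreover have "t * b \<le> t * inner a v" using ab(2) that \<open>0 < t\<close> by auto
      ultimately show ?thesis by (simp add: inner_diff_left)
    qed
    then have "legendre (ext_ind N f) (x - t *\<^sub>R a) \<le> ereal (F x - t * b)"
      by (rule legendre_ext_ind_le)
    then show ?thesis by (simp add: F)
  qed
  moreover have "F x - t * inner a y - e \<le> F (x - t *\<^sub>R a)"
    using y[unfolded eps_subgrad_def, rule_format, of "x - t *\<^sub>R a"] by (simp add: inner_commute)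
  ultimately have "t * (b - inner a y) \<le> e" by (simp add: algebra_simps)
  moreover have "t * (b - inner a y) = e + 1" using ab(1) by (simp add: t_def)
  ultimately show False by simp
qed

lemma eps_subgrad_near_gradient_on_compact:
  fixes F :: "'a::euclidean_space \<Rightarrow> real" and G :: "'a \<Rightarrow> 'a"
  assumes cvx: "convex_on UNIV F" and der: "\<And>x. (F has_derivative (\<lambda>h. inner (G x) h)) (at x)"
    and cG: "continuous_on M G" and "compact M" and "\<delta> > 0"
  shows "\<exists>e>0. \<forall>m\<in>M. \<forall>u. eps_subgrad F e m u \<longrightarrow> norm (u - G m) < \<delta>"
proof (rule ccontr)
  assume contra: "\<not> ?thesis"
  have "\<exists>m u. m \<in> M \<and> eps_subgrad F (1 / Suc k) m u \<and> \<delta> \<le> norm (u - G m)" for k :: nat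
    using contra[unfolded not_ex, rule_format, of "1 / Suc k"] by (auto simp: not_less)
  then obtain m u where m: "\<And>k. m k \<in> M" and u: "\<And>k. eps_subgrad F (1 / Suc k) (m k) (u k)"
    and far: "\<And>k. \<delta> \<le> norm (u k - G (m k))"
    by metis
  have "\<exists>v. eps_subgrad F (1 / Suc k) (m k) v \<and> norm (v - G (m k)) = \<delta>" for k
    using eps_subgrad_at_distance[OF gradient_eps_subgrad_zero[OF cvx der] u \<open>\<delta> > 0\<close> far]
    by metis
  then obtain v where v: "\<And>k. eps_subgrad F (1 / Suc k) (m k) (v k)"
    and v_dist: "\<And>k. norm (v k - G (m k)) = \<delta>"
    by metis
  obtain B where B: "\<And>m. m \<in> M \<Longrightarrow> norm (G m) \<le> B"
    using compact_imp_bounded[OF compact_continuous_image[OF cG \<open>compact M\<close>]]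
    by (auto simp: bounded_iff)
  have "v k \<in> cball 0 (B + \<delta>)" for k
    using norm_triangle_sub[of "v k" "G (m k)"] B[OF m[of k]] v_dist[of k] by simp
  with m have mv: "\<forall>k. (m k, v k) \<in> M \<times> cball 0 (B + \<delta>)" by simp
  have "seq_compact (M \<times> cball (0::'a) (B + \<delta>))"
    by (intro compact_imp_seq_compact compact_Times \<open>compact M\<close> compact_cball)
  then obtain l r where "l \<in> M \<times> cball 0 (B + \<delta>)" and r: "strict_mono r"
    and lim: "((\<lambda>k. (m k, v k)) \<circ> r) \<longlonglongrightarrow> l"
    using mv by (rule seq_compactE)
  then obtain m0 v0 where "m0 \<in> M" and lim: "((\<lambda>k. (m k, v k)) \<circ> r) \<longlonglongrightarrow> (m0, v0)"
    by (cases l) auto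
  have mr: "(\<lambda>k. m (r k)) \<longlonglongrightarrow> m0" and vr: "(\<lambda>k. v (r k)) \<longlonglongrightarrow> v0"
    using tendsto_fst[OF lim] tendsto_snd[OF lim] by (simp_all add: o_def)
  have "(\<lambda>k. 1 / real (Suc (r k))) \<longlonglongrightarrow> 0"
    using LIMSEQ_subseq_LIMSEQ[OF LIMSEQ_Suc[OF lim_inverse_n'] r] by (simp add: o_def)
  moreover have "isCont F m0"
    using der[of m0] by (rule has_derivative_continuous)
  ultimately have "eps_subgrad F 0 m0 v0"
    using v mr vr by (intro eps_subgrad_limit[where e = "\<lambda>k. 1 / Suc (r k)"])
  then have "v0 = G m0"
    by (rule eps_subgrad_zero_eq_gradient[OF der])
  moreover have "(\<lambda>k. norm (v (r k) - G (m (r k)))) \<longlonglongrightarrow> norm (v0 - G m0)"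
    using continuous_on_tendsto_compose[OF cG mr \<open>m0 \<in> M\<close>] m vr by (auto intro!: tendsto_intros)
  then have "norm (v0 - G m0) = \<delta>"
    using v_dist by (simp add: LIMSEQ_const_iff)
  ultimately show False
    using \<open>\<delta> > 0\<close> by simp
qed

lemma eps_subgrad_near_gradient:
  fixes F :: "'a::euclidean_space \<Rightarrow> real" and G :: "'a \<Rightarrow> 'a"
  assumes F: "\<And>x. legendre (ext_ind N f) x = ereal (F x)" and "convex N"
    and der: "\<And>x. (F has_derivative (\<lambda>h. inner (G x) h)) (at x)"
    and cG: "continuous_on M G" and "compact M" and GM: "G ` M = N" and "\<delta> > 0"
  shows "\<exists>e>0. \<forall>x y. eps_subgrad F e x y \<longrightarrow> norm (y - G x) < \<delta>"
proof -
  have cvx: "convex_on UNIV F"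
    using F by (rule convex_on_legendre_ext_ind)
  have grad: "eps_subgrad F 0 x (G x)" for x
    using cvx der by (rule gradient_eps_subgrad_zero)
  have "closed N"
    using compact_continuous_image[OF cG \<open>compact M\<close>] GM by (simp add: compact_imp_closed)
  have mem: "y \<in> N" if "eps_subgrad F e x y" for e x y
    using F \<open>closed N\<close> \<open>convex N\<close> that by (rule eps_subgrad_legendre_ext_ind_mem)
  obtain e where "e > 0" and on_M: "\<And>m u. m \<in> M \<Longrightarrow> eps_subgrad F e m u \<Longrightarrow> norm (u - G m) < \<delta> / 2"
    using eps_subgrad_near_gradient_on_compact[OF cvx der cG \<open>compact M\<close>, of "\<delta> / 2"] \<open>\<delta> > 0\<close>
    by auto
  have "norm (y - G x) < \<delta>" if y: "eps_subgrad F e x y" for x y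
  proof -
    have "midpoint (G x) y \<in> N"
      using convexD[OF \<open>convex N\<close> mem[OF grad] mem[OF y], of "1/2" "1/2"]
      by (simp add: midpoint_def scaleR_add_right)
    then obtain m where "m \<in> M" and m: "G m = midpoint (G x) y"
      by (metis GM imageE)
    have "norm (G x - G m) < \<delta> / 2"
      using on_M[OF \<open>m \<in> M\<close> eps_subgrad_at_midpoint_preimage[OF grad m y]] .
    moreover have "norm (G x - G m) = norm (y - G x) / 2"
      using dist_midpoint(1)[of "G x" y] by (simp add: m dist_norm norm_minus_commute)
    ultimately show ?thesis by simp
  qed
  with \<open>e > 0\<close> show ?thesis by blast
qed

lemma ennreal_tendsto_0I:
  assumes "\<And>\<delta>. \<delta> > 0 \<Longrightarrow> \<forall>\<^sub>F n in F. a n \<le> ennreal \<delta>"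
  shows "(a \<longlongrightarrow> 0) F"
proof (rule order_tendstoI)
  fix c :: ennreal assume "0 < c"
  then obtain \<delta> where "\<delta> > 0" and "ennreal \<delta> < c"
    by (metis dense ennreal_enn2real enn2real_positive_iff less_top order.strict_trans)
  with assms[of \<delta>] show "\<forall>\<^sub>F n in F. a n < c"
    by (auto elim: eventually_mono intro: le_less_trans)
qed simp

theorem lemmaA1:
  fixes N :: "'a::euclidean_space set"
    and fn :: "nat \<Rightarrow> 'a \<Rightarrow> real" and f :: "'a \<Rightarrow> real"
    and F :: "'a \<Rightarrow> real" and G :: "'a \<Rightarrow> 'a" and M :: "'a set"
  assumes "compact N" and "convex N"
    and "\<And>n. convex_on N (fn n)" and "convex_on N f"
    and "\<And>x. legendre (ext_ind N f) x = ereal (F x)"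
    and "\<And>x. (F has_derivative (\<lambda>h. inner (G x) h)) (at x)"
    and "continuous_on UNIV G" and "\<And>x. G x \<in> N"
    and "compact M" and "G ` M = N"
    and "(\<lambda>n. SUP y\<in>N. ennreal \<bar>fn n y - f y\<bar>) \<longlonglongrightarrow> 0"
  shows "(\<lambda>n. SUP x. SUP y\<in>subdiff (legendre (ext_ind N (fn n))) x. ennreal (norm (y - G x)))
           \<longlonglongrightarrow> 0"
proof (rule ennreal_tendsto_0I)
  fix \<delta> :: real assume "\<delta> > 0"
  have cG: "continuous_on M G"
    using assms(7) by (rule continuous_on_subset) simp
  obtain e where "e > 0" and near: "\<And>x y. eps_subgrad F e x y \<Longrightarrow> norm (y - G x) < \<delta>"
    using eps_subgrad_near_gradient[OF assms(5,2,6) cG assms(9,10) \<open>\<delta> > 0\<close>] by blast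
  have "\<forall>\<^sub>F n in sequentially. (SUP y\<in>N. ennreal \<bar>fn n y - f y\<bar>) < ennreal (e / 2)"
    using order_tendstoD(2)[OF assms(11)] \<open>e > 0\<close> by simp
  then show "\<forall>\<^sub>F n in sequentially.
      (SUP x. SUP y\<in>subdiff (legendre (ext_ind N (fn n))) x. ennreal (norm (y - G x))) \<le> ennreal \<delta>"
  proof eventually_elim
    case (elim n)
    have close: "\<bar>fn n y - f y\<bar> \<le> e / 2" if "y \<in> N" for y
      using SUP_lessD[OF elim that] by (simp add: ennreal_less_iff)
    have "norm (y - G x) < \<delta>" if "y \<in> subdiff (legendre (ext_ind N (fn n))) x" for x y
    proof -
      have "eps_subgrad F (2 * (e / 2)) x y"
        using assms(5) close that by (rule subdiff_legendre_ext_ind_eps_subgrad)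
      with near show ?thesis by simp
    qed
    then show ?case
      by (intro SUP_least ennreal_leI less_imp_le)
  qed
qed

end
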